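(* Let $\langle A, \leq, \otimes, \ominus, \mathbf{1}\rangle$ be a residuated partially ordered monoid with bottom element $\bot$, let $k\geq1$ and $a = a_1\ldots a_k$, $b = b_1\ldots b_k \in Lex_k(A)$. If $\delta(a,b) = \gamma(a,b) \leq k$ or $\delta(a,b) > \gamma(a,b)$, then the residuation $a \ominus_k b$ of $a$ by $b$ in $\langle Lex_k(A), \leq_k, \otimes^k, \mathbf{1}^k\rangle$ exists and equals $$(a_1 \ominus b_1) \ldots (a_{\gamma(a,b)} \ominus b_{\gamma(a,b)})\,\bot^{k-\gamma(a,b)},$$ that is, this tuple $r$ lies in $Lex_k(A)$ and for every $c \in Lex_k(A)$, $b \otimes^k c \leq_k a$ iff $c \leq_k r$.
   Context: A residuated partially ordered monoid $\langle A, \leq, \otimes, \ominus, \mathbf{1}\rangle$ consists of a partial order $\langle A,\leq\rangle$, a commutative monoid $\langle A,\otimes,\mathbf{1}\rangle$, and a binary operation $\ominus$ with $b \otimes c \leq a$ iff $c \leq a \ominus b$ for all $a,b,c\in A$. $a<b$ means $a\leq b$, $a\neq b$. $I(A) = \{c \in A \mid \forall a,b \in A.\ a \otimes c = b \otimes c \Rightarrow a = b\}$, $C(A)=A\setminus I(A)$. $Lex_k(A)\subseteq A^k$: $Lex_1(A) = A$, $Lex_{k+1}(A) = I(A)\, Lex_k(A) \cup C(A)\{\bot\}^k$ (concatenations of sequences; $\{\bot\}^k$ the singleton of $k$ copies of $\bot$). The order $\leq_k$: $\leq_1=\leq$, and for $k\geq2$, $a_1 \ldots a_k \leq_k b_1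 \ldots b_k$ iff $a_1 < b_1$, or $a_1 = b_1$ and $a_2 \ldots a_k \leq_{k-1} b_2 \ldots b_k$. $\otimes^k$ is componentwise, $\mathbf{1}^k=\mathbf{1}\ldots\mathbf{1}$; $\bot^n$ is the sequence of $n$ copies of $\bot$. For $a,b\in Lex_k(A)$: $\gamma(a,b) = \min\{ i \mid a_i \ominus b_i \in C(A)\}$ and $\delta(a,b) = \min\{ i \mid (a_i \ominus b_i) \otimes b_i < a_i\}$, each equal to $k+1$ if the set is empty. *)

theory Defs
  imports Main
begin

text \<open>The carrier A of the residuated partially ordered monoid is the whole type 'a,
  with the partial order of the type class order.\<close>

definition res_pomonoid :: "('a::order \<Rightarrow> 'a \<Rightarrow> 'a) \<Rightarrow> ('a \<Rightarrow> 'a \<Rightarrow> 'a) \<Rightarrow> 'a \<Rightarrow> bool" where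
  "res_pomonoid mult res one \<longleftrightarrow>
     (\<forall>a b c. mult (mult a b) c = mult a (mult b c)) \<and>
     (\<forall>a b. mult a b = mult b a) \<and>
     (\<forall>a. mult one a = a) \<and>
     (\<forall>a b c. mult b c \<le> a \<longleftrightarrow> c \<le> res a b)"

definition Icanc :: "('a \<Rightarrow> 'a \<Rightarrow> 'a) \<Rightarrow> 'a set" where
  "Icanc mult = {c. \<forall>a b. mult a c = mult b c \<longrightarrow> a = b}"

definition Cnc :: "('a \<Rightarrow> 'a \<Rightarrow> 'a) \<Rightarrow> 'a set" where
  "Cnc mult = UNIV - Icanc mult"

text \<open>Lex_k(A) as a set of lists of length k (only meaningful for k \<ge> 1).\<close>
fun Lex :: "('a \<Rightarrow> 'a \<Rightarrow> 'a) \<Rightarrow> 'a \<Rightarrow> nat \<Rightarrow> 'a list set" where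
  "Lex mult bt 0 = {}"
| "Lex mult bt (Suc 0) = {[x] | x. True}"
| "Lex mult bt (Suc (Suc k)) =
     {c # s | c s. c \<in> Icanc mult \<and> s \<in> Lex mult bt (Suc k)} \<union>
     {c # replicate (Suc k) bt | c. c \<in> Cnc mult}"

fun lex_le :: "'a::order list \<Rightarrow> 'a list \<Rightarrow> bool" where
  "lex_le [x] [y] = (x \<le> y)"
| "lex_le (x # x' # xs) (y # y' # ys) = (x < y \<or> (x = y \<and> lex_le (x' # xs) (y' # ys)))"
| "lex_le _ _ = False"

definition mult_k :: "('a \<Rightarrow> 'a \<Rightarrow> 'a) \<Rightarrow> 'a list \<Rightarrow> 'a list \<Rightarrow> 'a list" where
  "mult_k mult a b = map2 mult a b"

text \<open>gamma and delta, with 1-based indices; k = length a.\<close>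
definition gamma :: "('a \<Rightarrow> 'a \<Rightarrow> 'a) \<Rightarrow> ('a \<Rightarrow> 'a \<Rightarrow> 'a) \<Rightarrow> 'a list \<Rightarrow> 'a list \<Rightarrow> nat" where
  "gamma mult res a b =
     (let S = {i. 1 \<le> i \<and> i \<le> length a \<and> res (a ! (i - 1)) (b ! (i - 1)) \<in> Cnc mult}
      in if S = {} then length a + 1 else Min S)"

definition delta :: "('a::order \<Rightarrow> 'a \<Rightarrow> 'a) \<Rightarrow> ('a \<Rightarrow> 'a \<Rightarrow> 'a) \<Rightarrow> 'a list \<Rightarrow> 'a list \<Rightarrow> nat" where
  "delta mult res a b =
     (let S = {i. 1 \<le> i \<and> i \<le> length a \<and>
                 mult (res (a ! (i - 1)) (b ! (i - 1))) (b ! (i - 1)) < a ! (i - 1)}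
      in if S = {} then length a + 1 else Min S)"

end

theory Submission
  imports Defs
begin

(* Residuals in Lex_k(A) are computed from the first coordinate on. Put x = a_1 \<ominus> b_1, so that
  b_1 c_1 \<le> a_1 iff c_1 \<le> x; only ties b_1 c_1 = a_1 require looking at the tails.
  If x is not cancellative, the residual is x \<bottom>^(k-1). In a tie, either b_1 is not cancellative and
  b has a \<bottom>-tail, or b_1 x \<le> a_1 = b_1 c_1 \<le> b_1 x and cancelling b_1 gives c_1 = x, so c has a
  \<bottom>-tail; either way the tail of b \<otimes> c is \<bottom>^(k-1).
  If x is cancellative and exact, b_1 x = a_1, then the ties are exactly c_1 = x (when b_1 is
  cancellative; otherwise the tails compare trivially), so the comparison passes to the tails and the
  residual is x followed by the residual of the tails. The hypothesis on \<gamma> and \<delta> guarantees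
  exactness at every position before \<gamma>. *)

context
  fixes mult res :: "'a::order \<Rightarrow> 'a \<Rightarrow> 'a" and one :: 'a
  assumes rpm: "res_pomonoid mult res one"
begin

lemma res_pomonoid_commute: "mult x y = mult y x"
  using rpm unfolding res_pomonoid_def by blast

lemma res_pomonoid_residuation: "mult b c \<le> a \<longleftrightarrow> c \<le> res a b"
  using rpm unfolding res_pomonoid_def by blast

lemma res_pomonoid_mono: "x \<le> y \<Longrightarrow> mult b x \<le> mult b y"
  using order_trans res_pomonoid_residuation by blast

lemma res_pomonoid_mult_res_le: "mult b (res a b) \<le> a"
  using res_pomonoid_residuation by blast

lemma res_pomonoid_mult_bot:
  assumes "\<forall>x. bt \<le> x"
  shows "mult b bt = bt" and "mult bt b = bt"
  using assms res_pomonoid_residuation res_pomonoid_commute by (metis antisym)+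

lemma res_pomonoid_cancel_iff:
  assumes "y \<in> Icanc mult" and "mult y (res x y) = x"
  shows "mult y z = x \<longleftrightarrow> z = res x y" and "mult y z < x \<longleftrightarrow> z < res x y"
proof -
  show eq: "mult y z = x \<longleftrightarrow> z = res x y"
  proof
    assume "mult y z = x"
    then have "mult z y = mult (res x y) y"
      using assms(2) res_pomonoid_commute by simp
    then show "z = res x y"
      using assms(1) unfolding Icanc_def by blast
  qed (use assms(2) in simp)
  show "mult y z < x \<longleftrightarrow> z < res x y"
    using eq res_pomonoid_residuation by (auto simp: order.strict_iff_order)
qed

end

lemma Min_index_set_eq_Suc_Least:
  fixes P :: "nat \<Rightarrow> bool"
  shows "(let S = {i. 1 \<le> i \<and> i \<le> n \<and> P (i - 1)} in if S = {} then n + 1 else Min S)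
    = Suc (LEAST i. P i \<or> i = n)"
proof -
  define m where "m = (LEAST i. P i \<or> i = n)"
  have m_le: "m \<le> n"
    unfolding m_def by (rule Least_le) simp
  have m_first: "\<not> P j" if "j < m" for j
    using not_less_Least[of j "\<lambda>i. P i \<or> i = n"] that unfolding m_def by simp
  have m_P: "P m \<or> m = n"
    unfolding m_def by (rule LeastI[of _ n]) simp
  define S where "S = {i. 1 \<le> i \<and> i \<le> n \<and> P (i - 1)}"
  have S_ge: "Suc m \<le> i" if "i \<in> S" for i
    using that m_first[of "i - 1"] unfolding S_def by (cases i) (auto intro: leI)
  show ?thesis
  proof (cases "m = n")
    case True
    then have "S = {}" using S_ge unfolding S_def by fastforce
    then show ?thesis using True by (simp add: S_def m_def)
  next
    case False
    then have "Suc m \<in> S" using m_P m_le unfolding S_def by auto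
    moreover have "finite S" unfolding S_def by simp
    ultimately have "Min S = Suc m" using S_ge by (intro Min_eqI) auto
    then show ?thesis using \<open>Suc m \<in> S\<close> by (auto simp: S_def m_def Let_def)
  qed
qed

lemma Least_disj_eq_Suc:
  fixes P :: "nat \<Rightarrow> bool"
  shows "(LEAST i. P i \<or> i = Suc n) = (if P 0 then 0 else Suc (LEAST i. P (Suc i) \<or> i = n))"
proof (cases "P 0")
  case False
  then show ?thesis using Least_Suc[of "\<lambda>i. P i \<or> i = Suc n" "Suc n"] by simp
qed (simp add: Least_eq_0)

lemma gamma_eq_Least:
  "gamma mult res a b = Suc (LEAST i. res (a ! i) (b ! i) \<in> Cnc mult \<or> i = length a)"
  unfolding gamma_def
  by (rule Min_index_set_eq_Suc_Least[where P = "\<lambda>i. res (a ! i) (b ! i) \<in> Cnc mult"])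

lemma delta_eq_Least:
  "delta mult res a b = Suc (LEAST i. mult (res (a ! i) (b ! i)) (b ! i) < a ! i \<or> i = length a)"
  unfolding delta_def
  by (rule Min_index_set_eq_Suc_Least[where P = "\<lambda>i. mult (res (a ! i) (b ! i)) (b ! i) < a ! i"])

lemma gamma_Cons:
  "gamma mult res (x # xs) (y # ys) =
     (if res x y \<in> Cnc mult then 1 else Suc (gamma mult res xs ys))"
  unfolding gamma_eq_Least by (simp add: Least_disj_eq_Suc)

lemma delta_Cons:
  "delta mult res (x # xs) (y # ys) =
     (if mult (res x y) y < x then 1 else Suc (delta mult res xs ys))"
  unfolding delta_eq_Least by (simp add: Least_disj_eq_Suc)

lemma gamma_ge_1: "1 \<le> gamma mult res a b"
  unfolding gamma_eq_Least by simp

lemma min_gamma_le_delta_ConsD: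
  assumes rpm: "res_pomonoid mult res one"
    and exact: "min (gamma mult res (x # xs) (y # ys)) (Suc (length xs)) \<le> delta mult res (x # xs) (y # ys)"
    and "xs \<noteq> []" and "res x y \<notin> Cnc mult"
  shows "mult y (res x y) = x" and "min (gamma mult res xs ys) (length xs) \<le> delta mult res xs ys"
proof -
  have "2 \<le> min (gamma mult res (x # xs) (y # ys)) (Suc (length xs))"
    using gamma_ge_1[of mult res xs ys] \<open>xs \<noteq> []\<close> \<open>res x y \<notin> Cnc mult\<close>
    by (simp add: gamma_Cons Suc_le_eq)
  then have "\<not> mult (res x y) y < x"
    and "delta mult res (x # xs) (y # ys) = Suc (delta mult res xs ys)"
    using exact by (auto simp: delta_Cons split: if_splits)
  then show "mult y (res x y) = x" and "min (gamma mult res xs ys) (length xs) \<le> delta mult res xs ys"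
    using exact \<open>res x y \<notin> Cnc mult\<close> res_pomonoid_mult_res_le[OF rpm, of y x]
      res_pomonoid_commute[OF rpm, of y "res x y"]
    by (auto simp: gamma_Cons order.strict_iff_order)
qed

lemma Lex_length: "a \<in> Lex mult bt k \<Longrightarrow> length a = k"
  by (induction mult bt k arbitrary: a rule: Lex.induct) auto

lemma replicate_bot_in_Lex: "k \<ge> 1 \<Longrightarrow> replicate k bt \<in> Lex mult bt k"
proof (induction k)
  case (Suc k)
  then show ?case by (cases k) (auto simp: Cnc_def)
qed simp

lemma Lex_Cons_iff:
  assumes "n \<ge> 1"
  shows "x # xs \<in> Lex mult bt (Suc n) \<longleftrightarrow>
    xs \<in> Lex mult bt n \<and> (x \<in> Cnc mult \<longrightarrow> xs = replicate n bt)"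
  using assms replicate_bot_in_Lex[OF assms] by (cases n) (auto simp: Cnc_def)

lemma lex_le_Cons:
  "xs \<noteq> [] \<Longrightarrow> ys \<noteq> [] \<Longrightarrow> lex_le (x # xs) (y # ys) \<longleftrightarrow> x < y \<or> x = y \<and> lex_le xs ys"
  by (cases xs; cases ys) auto

lemma lex_le_refl: "xs \<noteq> [] \<Longrightarrow> lex_le xs xs"
proof (induction xs)
  case (Cons x xs)
  then show ?case by (cases xs) auto
qed simp

lemma lex_le_replicate_bot:
  assumes "\<forall>x. bt \<le> x"
  shows "xs \<noteq> [] \<Longrightarrow> lex_le (replicate (length xs) bt) xs"
proof (induction xs)
  case (Cons x xs)
  then show ?case
    using assms by (cases xs) (auto simp: lex_le_Cons order.order_iff_strict)
qed simp

lemma mult_k_Cons: "mult_k mult (y # ys) (z # zs) = mult y z # mult_k mult ys zs"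
  by (simp add: mult_k_def)

lemma length_mult_k [simp]: "length (mult_k mult ys zs) = min (length ys) (length zs)"
  by (simp add: mult_k_def)

lemma mult_k_replicate_bot:
  assumes "res_pomonoid mult res one" and "\<forall>x. bt \<le> x" and "length zs = n"
  shows "mult_k mult (replicate n bt) zs = replicate n bt"
    and "mult_k mult zs (replicate n bt) = replicate n bt"
  using assms(3) res_pomonoid_mult_bot[OF assms(1,2)]
  by (induction zs arbitrary: n) (auto simp: mult_k_def)

lemma lex_le_mult_k_Cons_iff:
  assumes "length ys = length xs" and "length zs = length xs" and "xs \<noteq> []"
  shows "lex_le (mult_k mult (y # ys) (z # zs)) (x # xs) \<longleftrightarrow>
    mult y z < x \<or> mult y z = x \<and> lex_le (mult_k mult ys zs) xs"
proof -
  have "mult_k mult ys zs \<noteq> []"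
    using assms by (simp flip: length_greater_0_conv)
  then show ?thesis using assms(3) by (simp add: mult_k_Cons lex_le_Cons)
qed

lemma lex_le_mult_k_Cons_iff_Cnc:
  assumes rpm: "res_pomonoid mult res one" and bot: "\<forall>x. bt \<le> x"
    and x1: "res x y \<in> Cnc mult"
    and ys: "y \<in> Cnc mult \<longrightarrow> ys = replicate n bt" and zs: "z \<in> Cnc mult \<longrightarrow> zs = replicate n bt"
    and len: "length xs = n" "length ys = n" "length zs = n" and "n \<ge> 1"
  shows "lex_le (mult_k mult (y # ys) (z # zs)) (x # xs) \<longleftrightarrow>
    lex_le (z # zs) (res x y # replicate n bt)"
proof -
  have ne: "xs \<noteq> []" "zs \<noteq> []" "replicate n bt \<noteq> []" using len \<open>n \<ge> 1\<close> by auto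
  have rhs: "lex_le (z # zs) (res x y # replicate n bt) \<longleftrightarrow> z \<le> res x y"
    using x1 zs lex_le_refl[OF ne(2)] \<open>n \<ge> 1\<close>
    by (auto simp: lex_le_Cons ne(2) order.order_iff_strict)
  have tail: "lex_le (mult_k mult ys zs) xs" if "z \<le> res x y" and "mult y z = x"
  proof -
    have "mult_k mult ys zs = replicate n bt"
    proof (cases "y \<in> Cnc mult")
      case True
      then show ?thesis using ys len mult_k_replicate_bot(1)[OF rpm bot len(3)] by simp
    next
      case False
      have "mult y (res x y) \<le> mult y z"
        using res_pomonoid_mult_res_le[OF rpm] \<open>mult y z = x\<close> by simp
      then have "mult y z = mult y (res x y)"
        using res_pomonoid_mono[OF rpm \<open>z \<le> res x y\<close>] by (rule antisym[rotated])
      then have "z = res x y"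
        using False res_pomonoid_commute[OF rpm] unfolding Cnc_def Icanc_def by auto
      then show ?thesis using x1 zs len mult_k_replicate_bot(2)[OF rpm bot len(2)] by simp
    qed
    then show ?thesis using lex_le_replicate_bot[OF bot ne(1)] len by simp
  qed
  have lhs: "lex_le (mult_k mult (y # ys) (z # zs)) (x # xs) \<longleftrightarrow>
      mult y z < x \<or> mult y z = x \<and> lex_le (mult_k mult ys zs) xs"
    using len ne(1) by (simp add: lex_le_mult_k_Cons_iff)
  show ?thesis
    unfolding lhs rhs using tail res_pomonoid_residuation[OF rpm, of y z x]
    by (auto simp: order.order_iff_strict)
qed

lemma lex_le_mult_k_Cons_iff_Icanc:
  assumes rpm: "res_pomonoid mult res one" and bot: "\<forall>x. bt \<le> x"
    and exact: "mult y (res x y) = x"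
    and ys: "y \<in> Cnc mult \<longrightarrow> ys = replicate n bt"
    and len: "length xs = n" "length ys = n" "length zs = n" "length r = n" and "n \<ge> 1"
    and tail: "lex_le (mult_k mult ys zs) xs \<longleftrightarrow> lex_le zs r"
  shows "lex_le (mult_k mult (y # ys) (z # zs)) (x # xs) \<longleftrightarrow> lex_le (z # zs) (res x y # r)"
proof -
  have ne: "xs \<noteq> []" "zs \<noteq> []" "r \<noteq> []" using len \<open>n \<ge> 1\<close> by auto
  have lhs: "lex_le (mult_k mult (y # ys) (z # zs)) (x # xs) \<longleftrightarrow>
      mult y z < x \<or> mult y z = x \<and> lex_le zs r"
    using len ne(1) tail by (simp add: lex_le_mult_k_Cons_iff)
  show ?thesis
  proof (cases "y \<in> Cnc mult")
    case True
    then have "lex_le (mult_k mult ys zs) xs"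
      using ys len mult_k_replicate_bot(1)[OF rpm bot len(3)] lex_le_replicate_bot[OF bot ne(1)] by simp
    then show ?thesis
      using lhs tail ne res_pomonoid_residuation[OF rpm]
      by (auto simp: lex_le_Cons order.order_iff_strict)
  next
    case False
    then have "y \<in> Icanc mult" by (simp add: Cnc_def)
    then show ?thesis
      using lhs ne res_pomonoid_cancel_iff[OF rpm _ exact] by (simp add: lex_le_Cons)
  qed
qed

definition is_lex_residual ::
  "('a::order \<Rightarrow> 'a \<Rightarrow> 'a) \<Rightarrow> 'a \<Rightarrow> nat \<Rightarrow> 'a list \<Rightarrow> 'a list \<Rightarrow> 'a list \<Rightarrow> bool"
  where "is_lex_residual mult bt k a b r \<longleftrightarrow>
    r \<in> Lex mult bt k \<and> (\<forall>c \<in> Lex mult bt k. lex_le (mult_k mult b c) a \<longleftrightarrow> lex_le c r)"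

lemma is_lex_residual_singleton:
  assumes "res_pomonoid mult res one"
  shows "is_lex_residual mult bt (Suc 0) [x] [y] [res x y]"
  using res_pomonoid_residuation[OF assms]
  by (auto simp: is_lex_residual_def mult_k_def)

lemma is_lex_residual_Cons_intro:
  assumes "n \<ge> 1" and "r \<in> Lex mult bt (Suc n)"
    and "\<And>z zs. zs \<in> Lex mult bt n \<Longrightarrow> length zs = n \<Longrightarrow> (z \<in> Cnc mult \<longrightarrow> zs = replicate n bt) \<Longrightarrow>
      lex_le (mult_k mult b (z # zs)) a \<longleftrightarrow> lex_le (z # zs) r"
  shows "is_lex_residual mult bt (Suc n) a b r"
  unfolding is_lex_residual_def
proof (intro conjI ballI assms(2))
  fix c assume c: "c \<in> Lex mult bt (Suc n)"
  obtain z zs where c_eq: "c = z # zs"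
    using Lex_length[OF c] by (cases c) auto
  with c have zs: "zs \<in> Lex mult bt n" "z \<in> Cnc mult \<longrightarrow> zs = replicate n bt"
    by (simp_all add: Lex_Cons_iff[OF assms(1)])
  show "lex_le (mult_k mult b c) a \<longleftrightarrow> lex_le c r"
    unfolding c_eq by (rule assms(3)[OF zs(1) Lex_length[OF zs(1)] zs(2)])
qed

definition lex_residual :: "('a \<Rightarrow> 'a \<Rightarrow> 'a) \<Rightarrow> ('a \<Rightarrow> 'a \<Rightarrow> 'a) \<Rightarrow> 'a \<Rightarrow> 'a list \<Rightarrow> 'a list \<Rightarrow> 'a list"
  where "lex_residual mult res bt a b =
    (let g = gamma mult res a b in map2 res (take g a) (take g b) @ replicate (length a - g) bt)"

lemma lex_residual_Cons:
  "lex_residual mult res bt (x # xs) (y # ys) =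
     res x y # (if res x y \<in> Cnc mult then replicate (length xs) bt else lex_residual mult res bt xs ys)"
  unfolding lex_residual_def gamma_Cons by (simp add: Let_def)

lemma lex_residual_Nil [simp]: "lex_residual mult res bt [] b = []"
  by (simp add: lex_residual_def Let_def)

lemma is_lex_residual_Cons_Cnc:
  assumes rpm: "res_pomonoid mult res one" and bot: "\<forall>x. bt \<le> x" and "n \<ge> 1"
    and b: "y # ys \<in> Lex mult bt (Suc n)" and "length xs = n" and x1: "res x y \<in> Cnc mult"
  shows "is_lex_residual mult bt (Suc n) (x # xs) (y # ys) (res x y # replicate n bt)"
proof (rule is_lex_residual_Cons_intro[OF \<open>n \<ge> 1\<close>])
  show "res x y # replicate n bt \<in> Lex mult bt (Suc n)"
    using x1 by (simp add: Lex_Cons_iff[OF \<open>n \<ge> 1\<close>] replicate_bot_in_Lex[OF \<open>n \<ge> 1\<close>])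
  have ys: "ys \<in> Lex mult bt n" "y \<in> Cnc mult \<longrightarrow> ys = replicate n bt"
    using b by (simp_all add: Lex_Cons_iff[OF \<open>n \<ge> 1\<close>])
  fix z zs assume "length zs = n" and "z \<in> Cnc mult \<longrightarrow> zs = replicate n bt"
  then show "lex_le (mult_k mult (y # ys) (z # zs)) (x # xs) \<longleftrightarrow>
      lex_le (z # zs) (res x y # replicate n bt)"
    using lex_le_mult_k_Cons_iff_Cnc[OF rpm bot x1 ys(2)] Lex_length[OF ys(1)] \<open>length xs = n\<close> \<open>n \<ge> 1\<close>
    by simp
qed

lemma is_lex_residual_Cons_Icanc:
  assumes rpm: "res_pomonoid mult res one" and bot: "\<forall>x. bt \<le> x" and "n \<ge> 1"
    and b: "y # ys \<in> Lex mult bt (Suc n)" and "length xs = n"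
    and x1: "res x y \<notin> Cnc mult" and exact: "mult y (res x y) = x"
    and tail: "is_lex_residual mult bt n xs ys r"
  shows "is_lex_residual mult bt (Suc n) (x # xs) (y # ys) (res x y # r)"
proof (rule is_lex_residual_Cons_intro[OF \<open>n \<ge> 1\<close>])
  have r: "r \<in> Lex mult bt n" "\<forall>c \<in> Lex mult bt n. lex_le (mult_k mult ys c) xs \<longleftrightarrow> lex_le c r"
    using tail by (simp_all add: is_lex_residual_def)
  show "res x y # r \<in> Lex mult bt (Suc n)"
    using r(1) x1 by (simp add: Lex_Cons_iff[OF \<open>n \<ge> 1\<close>])
  have ys: "ys \<in> Lex mult bt n" "y \<in> Cnc mult \<longrightarrow> ys = replicate n bt"
    using b by (simp_all add: Lex_Cons_iff[OF \<open>n \<ge> 1\<close>])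
  fix z zs assume "zs \<in> Lex mult bt n" and "length zs = n"
  then show "lex_le (mult_k mult (y # ys) (z # zs)) (x # xs) \<longleftrightarrow> lex_le (z # zs) (res x y # r)"
    using lex_le_mult_k_Cons_iff_Icanc[OF rpm bot exact ys(2)] r Lex_length[OF ys(1)]
      Lex_length[OF r(1)] \<open>length xs = n\<close> \<open>n \<ge> 1\<close>
    by simp
qed

(* Exactness is only needed at positions before both \<gamma> and k, which is weaker than the
  hypothesis of the theorem. *)
lemma lex_residual_residuation:
  assumes rpm: "res_pomonoid mult res one" and bot: "\<forall>x. bt \<le> x"
  shows "a \<in> Lex mult bt k \<Longrightarrow> b \<in> Lex mult bt k \<Longrightarrow>
    min (gamma mult res a b) k \<le> delta mult res a b \<Longrightarrow>
    is_lex_residual mult bt k a b (lex_residual mult res bt a b)"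
proof (induction a arbitrary: b k)
  case Nil
  then show ?case using Lex_length[OF Nil(1)] by simp
next
  case (Cons x xs)
  define n where "n = length xs"
  have k: "k = Suc n" using Lex_length[OF Cons.prems(1)] n_def by simp
  obtain y ys where b: "b = y # ys" and ys_len: "length ys = n"
    using Lex_length[OF Cons.prems(2)] k by (cases b) auto
  show ?case
  proof (cases "n = 0")
    case True
    then have "xs = []" "ys = []" using ys_len n_def by auto
    then show ?thesis
      using is_lex_residual_singleton[OF rpm] b k True by (simp add: lex_residual_Cons)
  next
    case False
    then have "n \<ge> 1" by simp
    show ?thesis
    proof (cases "res x y \<in> Cnc mult")
      case True
      then show ?thesis
        using is_lex_residual_Cons_Cnc[OF rpm bot \<open>n \<ge> 1\<close>] Cons.prems(2) b k n_def
        by (simp add: lex_residual_Cons)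
    next
      case False
      have xs_ne: "xs \<noteq> []" using \<open>n \<ge> 1\<close> n_def by auto
      have "min (gamma mult res (x # xs) (y # ys)) (Suc (length xs)) \<le> delta mult res (x # xs) (y # ys)"
        using Cons.prems(3) b k n_def by simp
      then have exact: "mult y (res x y) = x"
        and tail_exact: "min (gamma mult res xs ys) n \<le> delta mult res xs ys"
        using min_gamma_le_delta_ConsD[OF rpm _ xs_ne False] n_def by simp_all
      have "xs \<in> Lex mult bt n" "ys \<in> Lex mult bt n"
        using Cons.prems(1,2) k b by (simp_all add: Lex_Cons_iff[OF \<open>n \<ge> 1\<close>])
      then have "is_lex_residual mult bt n xs ys (lex_residual mult res bt xs ys)"
        using Cons.IH tail_exact by blast
      then show ?thesis
        using is_lex_residual_Cons_Icanc[OF rpm bot \<open>n \<ge> 1\<close> _ _ False exact] Cons.prems(2) b k n_def False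
        by (simp add: lex_residual_Cons)
    qed
  qed
qed

theorem proposition4:
  fixes mult res :: "'a::order \<Rightarrow> 'a \<Rightarrow> 'a" and one bt :: 'a
    and k :: nat and a b :: "'a list"
  assumes rpm: "res_pomonoid mult res one"
    and bot: "\<forall>x. bt \<le> x"
    and k: "k \<ge> 1"
    and a: "a \<in> Lex mult bt k" and b: "b \<in> Lex mult bt k"
    and hyp: "(delta mult res a b = gamma mult res a b \<and> gamma mult res a b \<le> k)
              \<or> delta mult res a b > gamma mult res a b"
  shows "(let g = gamma mult res a b;
              r = map2 res (take g a) (take g b) @ replicate (k - g) bt
          in r \<in> Lex mult bt k \<and>
             (\<forall>c \<in> Lex mult bt k. lex_le (mult_k mult b c) a \<longleftrightarrow> lex_le c r))"
proof -
  have "min (gamma mult res a b) k \<le> delta mult res a b"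
    using hyp by linarith
  then have "is_lex_residual mult bt k a b (lex_residual mult res bt a b)"
    by (rule lex_residual_residuation[OF rpm bot a b])
  then show ?thesis
    by (simp add: is_lex_residual_def lex_residual_def Let_def Lex_length[OF a])
qed

end
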